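(* In the induced continuum market $\widehat\Gamma$, let $M$ be a stable pseudo-matching and let $M'$ be obtained from $M$ by a type-1, type-2, or type-3 stable transformation. Then $M'$ is a stable pseudo-matching.
   Context: Finite firms $F$, finite workers $W=\{w_1,\dots,w_n\}$, null firm $\o$, $\widetilde F=F\cup\{\o\}$; each worker $w$ has a strict complete transitive preference $\succ_w$ over $\widetilde F$ ($f\succeq_w f'$ means $f\succ_w f'$ or $f=f'$); each firm $f\in F$ has a strict complete transitive preference $\succ_f$ over $2^W$, subsets identified with indicator vectors. For $f\in F$ list the sets $S\succ_f\emptyset$ as $\mathbf u^1\succ_f\cdots\succ_f\mathbf u^L$. For $\mathbf x\in[0,1]^W$ the procedure computing $\widehat{Ch}_f(\mathbf x)$ is: $t_0=0$, $\mathbf z^0=\mathbf x$, $t_k=\min\{1-\sum_{j<k}t_j,\ z^{k-1}_i: u^k_i\ne 0\}$, $\mathbf z^k=\mathbf z^{k-1}-t_k\mathbf u^k$ for $k=1,\dots,L$, and $\widehat{Ch}_f(\mathbf x)=\sum_k t_k\mathbf u^k$; $\widehat{Ch}_{\o}(\mathbf x)=\mathbf x$. A pseudo-matching is $M=(M_f)_{f\in\widetilde F}$ with each $M_f\in[0,1]^W$. For vectors, $\vee$ is componentwise max and $\le$ componentwise. Write $M'_f\succ_f M_f$ if $M'_f=\widehat{Ch}_f(M'_f\vee M_f)$ and $M'_f\neq M_f$. Let $A^{\preceq f}(M)(w)=\sum_{f'\in\widetilde F:f\succeq_w f'}M_{f'}(w)$. $M$ is stable if (i) $M_f=\widehat{Ch}_f(M_f)$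 for each $f\in F$ and $M_f(w)=0$ whenever $\o\succ_w f$; (ii) there are no $f\in F$, $M''\in[0,1]^W$ with $M''\succ_f M_f$ and $M''\le A^{\preceq f}(M)$. Stable transformations of $M$ into $M'$: Type-1: choose $f'\in F$ such that $\sum_{j=1}^L t_j<1$ in the procedure computing $\widehat{Ch}_{f'}(M_{f'})$; set $M'_{f'}=\mathbf 0$ and $M'_f=M_f$ for $f\ne f'$. Type-2: choose $f'\in F$ and an index $k$ with $t_k>0$ in the procedure computing $\widehat{Ch}_{f'}(M_{f'})$; set $M'_{f'}=\mathbf u^k$ (for $f'$'s list) and $M'_f=M_f$ for $f\neq f'$. Type-3: choose $w'\in W$ with $M_{\o}(w')\in(0,1)$; set $M'_{\o}(w')\in\{0,1\}$, $M'_{\o}(w)=M_{\o}(w)$ for $w\ne w'$, and $M'_f=M_f$ for $f\in F$. *)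

theory Defs
  imports Complex_Main
begin

(* Workers: the finite type 'w (W = UNIV).  Firms: the finite type 'f (F = UNIV).
   Extended firm set F~ = F \<union> {null}: the type 'f option, with None the null firm. *)

definition strict_lin :: "('a \<Rightarrow> 'a \<Rightarrow> bool) \<Rightarrow> bool" where
  "strict_lin R \<longleftrightarrow> (\<forall>x. \<not> R x x) \<and> (\<forall>x y z. R x y \<longrightarrow> R y z \<longrightarrow> R x z)
      \<and> (\<forall>x y. x \<noteq> y \<longrightarrow> R x y \<or> R y x)"

definition ind :: "'w set \<Rightarrow> 'w \<Rightarrow> real" where
  "ind S = (\<lambda>i. if i \<in> S then 1 else 0)"

(* the list u^1 \<succ>_f ... \<succ>_f u^L of sets S with S \<succ>_f {} (pf f S T means S \<succ>_f T) *)
definition acc_list :: "('f \<Rightarrow> 'w set \<Rightarrow> 'w set \<Rightarrow> bool) \<Rightarrow> 'f \<Rightarrow> 'w set list" where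
  "acc_list pf f = (THE us. distinct us \<and> set us = {S. pf f S {}} \<and> sorted_wrt (pf f) us)"

(* the procedure: r = remaining budget 1 - \<Sum>_{j<k} t_j, z = z^{k-1};
   returns the list [t_1, ..., t_L] *)
fun tlist :: "real \<Rightarrow> ('w::finite \<Rightarrow> real) \<Rightarrow> 'w set list \<Rightarrow> real list" where
  "tlist r z [] = []"
| "tlist r z (u # us) =
     (let t = Min (insert r {z i | i. ind u i \<noteq> 0})
      in t # tlist (r - t) (\<lambda>i. z i - t * ind u i) us)"

definition ts :: "('f \<Rightarrow> 'w set \<Rightarrow> 'w set \<Rightarrow> bool) \<Rightarrow> 'f \<Rightarrow> ('w::finite \<Rightarrow> real) \<Rightarrow> real list" where
  "ts pf f x = tlist 1 x (acc_list pf f)"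

definition Chhat :: "('f \<Rightarrow> 'w set \<Rightarrow> 'w set \<Rightarrow> bool) \<Rightarrow> 'f \<Rightarrow> ('w::finite \<Rightarrow> real) \<Rightarrow> ('w \<Rightarrow> real)" where
  "Chhat pf f x = (\<lambda>i. \<Sum>k<length (acc_list pf f). ts pf f x ! k * ind (acc_list pf f ! k) i)"

definition unit_vec :: "('w \<Rightarrow> real) \<Rightarrow> bool" where
  "unit_vec x \<longleftrightarrow> (\<forall>i. 0 \<le> x i \<and> x i \<le> 1)"

definition pseudo_matching :: "('f option \<Rightarrow> 'w \<Rightarrow> real) \<Rightarrow> bool" where
  "pseudo_matching M \<longleftrightarrow> (\<forall>f. unit_vec (M f))"

definition firm_prefers :: "('f \<Rightarrow> 'w set \<Rightarrow> 'w set \<Rightarrow> bool) \<Rightarrow> 'f \<Rightarrow> ('w::finite \<Rightarrow> real) \<Rightarrow> ('w \<Rightarrow> real) \<Rightarrow> bool" where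
  "firm_prefers pf f M'' Mf \<longleftrightarrow> M'' = Chhat pf f (\<lambda>i. max (M'' i) (Mf i)) \<and> M'' \<noteq> Mf"

(* A^{\<preceq> f}(M)(w); pw w a b means a \<succ>_w b *)
definition Aprec :: "('w \<Rightarrow> 'f::finite option \<Rightarrow> 'f option \<Rightarrow> bool) \<Rightarrow> ('f option \<Rightarrow> 'w \<Rightarrow> real) \<Rightarrow> 'f option \<Rightarrow> 'w \<Rightarrow> real" where
  "Aprec pw M f w = (\<Sum>f'\<in>{f'.  pw w f f' \<or> f = f'}. M f' w)"

definition stable :: "('w \<Rightarrow> 'f option \<Rightarrow> 'f option \<Rightarrow> bool) \<Rightarrow> ('f \<Rightarrow> 'w set \<Rightarrow> 'w set \<Rightarrow> bool)
     \<Rightarrow> ('f::finite option \<Rightarrow> 'w::finite \<Rightarrow> real) \<Rightarrow> bool" where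
  "stable pw pf M \<longleftrightarrow> pseudo_matching M
     \<and> (\<forall>f. M (Some f) = Chhat pf f (M (Some f)) \<and> (\<forall>w. pw w None (Some f) \<longrightarrow> M (Some f) w = 0))
     \<and> \<not> (\<exists>f M''. unit_vec M'' \<and> firm_prefers pf f M'' (M (Some f))
                 \<and> (\<forall>w. M'' w \<le> Aprec pw M (Some f) w))"

definition type1 :: "('f \<Rightarrow> 'w set \<Rightarrow> 'w set \<Rightarrow> bool) \<Rightarrow> ('f option \<Rightarrow> 'w::finite \<Rightarrow> real) \<Rightarrow> ('f option \<Rightarrow> 'w \<Rightarrow> real) \<Rightarrow> bool" where
  "type1 pf M M' \<longleftrightarrow> (\<exists>f'. sum_list (ts pf f' (M (Some f'))) < 1 \<and> M' = M(Some f' := (\<lambda>_. 0)))"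

definition type2 :: "('f \<Rightarrow> 'w set \<Rightarrow> 'w set \<Rightarrow> bool) \<Rightarrow> ('f option \<Rightarrow> 'w::finite \<Rightarrow> real) \<Rightarrow> ('f option \<Rightarrow> 'w \<Rightarrow> real) \<Rightarrow> bool" where
  "type2 pf M M' \<longleftrightarrow> (\<exists>f' k. k < length (acc_list pf f') \<and> ts pf f' (M (Some f')) ! k > 0
       \<and> M' = M(Some f' := ind (acc_list pf f' ! k)))"

definition type3 :: "('f option \<Rightarrow> 'w \<Rightarrow> real) \<Rightarrow> ('f option \<Rightarrow> 'w \<Rightarrow> real) \<Rightarrow> bool" where
  "type3 M M' \<longleftrightarrow> (\<exists>w' v. 0 < M None w' \<and> M None w' < 1 \<and> v \<in> {0, 1}
       \<and> M' = M(None := (M None)(w' := v)))"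

end

theory Submission
  imports Defs
begin

text \<open>
  Stability reduces to a fixed-point condition: with x_f(M) = min(A^{<=f}(M), 1), the most of each
  worker that f can claim, no firm blocks M iff Ch_f(x_f(M)) = M_f for every firm f.
  The procedure computing Ch_f only reacts to the coordinates at which one of its steps binds,
  so its output does not change when the input is lowered towards the output, or raised where
  the output stays strictly below the input.
  A stable transformation changes a single column of M. For every other firm f, x_f can only
  grow at a worker held with positive weight by the changed firm (or the null firm) that the
  worker ranks below f, and there f is not saturated. For the changed firm f', x_f'(M') is
  computed from the binding workers of the procedure, which f' holds up to their full
  availability, below 1. In a type-1 transformation the budget is not exhausted, so every
  acceptable set of f' contains such a worker; f' releases them all and then chooses nothing.
  In a type-2 transformation each set before u^k contains one outside u^k, while every worker
  of u^k becomes fully available, so f' chooses exactly u^k.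
\<close>

section \<open>The choice procedure\<close>

definition step_size :: "real \<Rightarrow> ('w::finite \<Rightarrow> real) \<Rightarrow> 'w set \<Rightarrow> real" where
  "step_size r z u = Min (insert r (z ` u))"

definition residual :: "real \<Rightarrow> ('w::finite \<Rightarrow> real) \<Rightarrow> 'w set \<Rightarrow> 'w \<Rightarrow> real" where
  "residual r z u = (\<lambda>i. z i - step_size r z u * ind u i)"

lemma tlist_Cons:
  "tlist r z (u # us) = step_size r z u # tlist (r - step_size r z u) (residual r z u) us"
proof -
  have "{z i |i. ind u i \<noteq> 0} = z ` u"
    by (auto simp: ind_def)
  then show ?thesis
    by (simp add: step_size_def residual_def Let_def)
qed

declare tlist.simps(2) [simp del]

fun chosen :: "real \<Rightarrow> ('w::finite \<Rightarrow> real) \<Rightarrow> 'w set list \<Rightarrow> 'w \<Rightarrow> real" where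
  "chosen r z [] i = 0"
| "chosen r z (u # us) i =
     step_size r z u * ind u i + chosen (r - step_size r z u) (residual r z u) us i"

lemma step_size_le_budget: "step_size r z u \<le> r"
  by (simp add: step_size_def)

lemma step_size_le_supply: "i \<in> u \<Longrightarrow> step_size r z u \<le> z i"
  by (simp add: step_size_def)

lemma step_size_greatest: "c \<le> r \<Longrightarrow> \<forall>i\<in>u. c \<le> z i \<Longrightarrow> c \<le> step_size r z u"
  by (simp add: step_size_def)

lemma step_size_attained: "step_size r z u = r \<or> (\<exists>i\<in>u. step_size r z u = z i)"
proof -
  have "step_size r z u \<in> insert r (z ` u)"
    unfolding step_size_def by (rule Min_in) auto
  then show ?thesis
    by auto
qed

lemma step_size_nonneg: "0 \<le> r \<Longrightarrow> \<forall>i. 0 \<le> z i \<Longrightarrow> 0 \<le> step_size r z u"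
  by (rule step_size_greatest) auto

lemma remaining_budget_nonneg: "0 \<le> r - step_size r z u"
  using step_size_le_budget by simp

lemma residual_nonneg: "\<forall>i. 0 \<le> z i \<Longrightarrow> \<forall>i. 0 \<le> residual r z u i"
  using step_size_le_supply by (auto simp: residual_def ind_def)

lemma procedure_induct [consumes 2, case_names Nil Cons]:
  assumes "0 \<le> r" "\<forall>i. 0 \<le> z i"
    and "\<And>r z. 0 \<le> r \<Longrightarrow> \<forall>i. 0 \<le> z i \<Longrightarrow> P r z []"
    and "\<And>r z u us. 0 \<le> r \<Longrightarrow> \<forall>i. 0 \<le> z i \<Longrightarrow>
      P (r - step_size r z u) (residual r z u) us \<Longrightarrow> P r z (u # us)"
  shows "P r z us"
  using assms(1,2)
proof (induction us arbitrary: r z)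
  case (Cons u us)
  then show ?case
    using assms(4) remaining_budget_nonneg residual_nonneg by blast
qed (use assms(3) in blast)

lemma length_tlist [simp]: "length (tlist r z us) = length us"
  by (induction us arbitrary: r z) (simp_all add: tlist_Cons)

lemma tlist_nonneg: "0 \<le> r \<Longrightarrow> \<forall>i. 0 \<le> z i \<Longrightarrow> t \<in> set (tlist r z us) \<Longrightarrow> 0 \<le> t"
proof (induction r z us rule: procedure_induct)
  case (Cons r z u us)
  then show ?case
    using step_size_nonneg[OF Cons.hyps(1,2)] by (auto simp: tlist_Cons)
qed simp

lemma sum_tlist_le_budget: "0 \<le> r \<Longrightarrow> \<forall>i. 0 \<le> z i \<Longrightarrow> sum_list (tlist r z us) \<le> r"
  by (induction r z us rule: procedure_induct) (simp_all add: tlist_Cons)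

lemma chosen_nonneg: "0 \<le> r \<Longrightarrow> \<forall>i. 0 \<le> z i \<Longrightarrow> 0 \<le> chosen r z us i"
  by (induction r z us rule: procedure_induct) (simp_all add: step_size_nonneg ind_def)

lemma chosen_le_supply: "0 \<le> r \<Longrightarrow> \<forall>i. 0 \<le> z i \<Longrightarrow> chosen r z us i \<le> z i"
  by (induction r z us rule: procedure_induct) (simp_all add: residual_def)

lemma chosen_le_sum_tlist:
  "0 \<le> r \<Longrightarrow> \<forall>i. 0 \<le> z i \<Longrightarrow> chosen r z us i \<le> sum_list (tlist r z us)"
proof (induction r z us rule: procedure_induct)
  case (Cons r z u us)
  have "step_size r z u * ind u i \<le> step_size r z u"
    using step_size_nonneg[OF Cons.hyps(1,2)] by (simp add: ind_def)
  then show ?case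
    using Cons.IH by (simp add: tlist_Cons)
qed simp

lemma sum_tlist_ind_eq_chosen:
  "(\<Sum>k<length us. tlist r z us ! k * ind (us ! k) i) = chosen r z us i"
  by (induction us arbitrary: r z)
    (simp_all del: sum.lessThan_Suc add: tlist_Cons sum.lessThan_Suc_shift)

lemma tlist_nth_le_chosen:
  assumes "0 \<le> r" "\<forall>i. 0 \<le> z i" "k < length us" "i \<in> us ! k"
  shows "tlist r z us ! k \<le> chosen r z us i"
proof -
  have "tlist r z us ! k = tlist r z us ! k * ind (us ! k) i"
    using assms(4) by (simp add: ind_def)
  also have "\<dots> \<le> (\<Sum>k<length us. tlist r z us ! k * ind (us ! k) i)"
    using assms tlist_nonneg[OF assms(1,2) nth_mem] by (intro member_le_sum) (auto simp: ind_def)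
  also have "\<dots> = chosen r z us i"
    by (rule sum_tlist_ind_eq_chosen)
  finally show ?thesis .
qed

lemma step_size_unchanged:
  assumes "\<forall>i\<in>u. step_size r z u \<le> z' i"
    and "\<forall>i\<in>u. z i = step_size r z u \<longrightarrow> z' i \<le> z i"
  shows "step_size r z' u = step_size r z u"
proof (rule antisym)
  show "step_size r z u \<le> step_size r z' u"
    using assms(1) step_size_le_budget by (intro step_size_greatest)
  show "step_size r z' u \<le> step_size r z u"
    using step_size_attained[of r z u] step_size_le_budget[of r z' u]
      step_size_le_supply[of _ u r z'] assms(2) by force
qed

lemma tlist_unchanged:
  assumes "0 \<le> r" "\<forall>i. 0 \<le> z i"
    and "\<forall>i. chosen r z us i \<le> z' i \<and> z' i \<le> z i \<or> chosen r z us i < z i \<and> z i \<le> z' i"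
  shows "tlist r z' us = tlist r z us"
  using assms
proof (induction r z us arbitrary: z' rule: procedure_induct)
  case (Cons r z u us)
  define t where "t = step_size r z u"
  have chosen_Cons: "chosen r z (u # us) i = t * ind u i + chosen (r - t) (residual r z u) us i" for i
    by (simp add: t_def)
  have t_le_chosen: "t \<le> chosen r z (u # us) i" if "i \<in> u" for i
    using that chosen_nonneg[OF remaining_budget_nonneg residual_nonneg[OF Cons.hyps(2)]]
    by (simp add: chosen_Cons ind_def t_def)
  have step: "step_size r z' u = t"
    unfolding t_def
  proof (rule step_size_unchanged; intro ballI impI)
    fix i assume "i \<in> u"
    note i_facts = t_le_chosen[OF this] step_size_le_supply[OF this, of r z] Cons.prems[rule_format, of i]
    then show "step_size r z u \<le> z' i"
      unfolding t_def by linarith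
    show "z' i \<le> z i" if "z i = step_size r z u"
      using i_facts that unfolding t_def by linarith
  qed
  have "\<forall>i. chosen (r - t) (residual r z u) us i \<le> residual r z' u i \<and> residual r z' u i \<le> residual r z u i
      \<or> chosen (r - t) (residual r z u) us i < residual r z u i \<and> residual r z u i \<le> residual r z' u i"
    (is "\<forall>i. ?shifted i")
  proof
    fix i
    have "residual r z' u i = z' i - t * ind u i" "residual r z u i = z i - t * ind u i"
      using step by (simp_all add: residual_def t_def)
    then show "?shifted i"
      using Cons.prems[rule_format, of i] chosen_Cons[of i] by linarith
  qed
  then have "tlist (r - t) (residual r z' u) us = tlist (r - t) (residual r z u) us"
    using Cons.IH by (simp add: t_def)
  then show ?case
    by (simp add: tlist_Cons step t_def)
qed simp

lemma tlist_zero_budget: "\<forall>i. 0 \<le> z i \<Longrightarrow> tlist 0 z us = replicate (length us) 0"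
proof (induction us arbitrary: z)
  case (Cons u us)
  have "step_size 0 z u = 0"
    using step_size_le_budget step_size_nonneg[OF order_refl Cons.prems] by (rule antisym)
  then show ?case
    using Cons.IH[OF residual_nonneg[OF Cons.prems]] by (simp add: tlist_Cons)
qed simp

lemma tlist_blocked_prefix:
  assumes "0 \<le> r" "\<forall>i. 0 \<le> z i" "\<forall>u\<in>set pre. \<exists>i\<in>u. z i = 0"
  shows "tlist r z (pre @ rest) = replicate (length pre) 0 @ tlist r z rest"
  using assms(3)
proof (induction pre)
  case (Cons u pre)
  then obtain i where "i \<in> u" "z i = 0"
    by auto
  then have "step_size r z u = 0"
    using step_size_le_supply step_size_nonneg[OF assms(1,2)] by (metis antisym)
  then show ?case
    using Cons by (simp add: tlist_Cons residual_def)
qed simp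

lemma tlist_saturating_head:
  assumes "0 \<le> r" "\<forall>i. 0 \<le> z i" "\<forall>i\<in>u. r \<le> z i"
  shows "tlist r z (u # rest) = r # replicate (length rest) 0"
proof -
  have "step_size r z u = r"
    using step_size_le_budget step_size_greatest[OF order_refl assms(3)] by (rule antisym)
  then show ?thesis
    using tlist_zero_budget[OF residual_nonneg[OF assms(2)]] by (simp add: tlist_Cons)
qed

lemma binding_worker_of_step_lt_budget:
  assumes "0 \<le> r" "\<forall>i. 0 \<le> z i" "step_size r z u < r"
  obtains i where "i \<in> u" "residual r z u i = 0" "chosen r z (u # us) i = z i"
proof -
  note rest_nonneg = remaining_budget_nonneg[of r z u] residual_nonneg[of z r u, OF assms(2)]
  obtain i where i: "i \<in> u" "step_size r z u = z i"
    using step_size_attained[of r z u] assms(3) by auto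
  then have "residual r z u i = 0"
    by (simp add: residual_def ind_def)
  moreover from this have "chosen (r - step_size r z u) (residual r z u) us i = 0"
    using chosen_nonneg[OF rest_nonneg, of us i] chosen_le_supply[OF rest_nonneg, of us i]
    by linarith
  ultimately show thesis
    using that i by (simp add: ind_def)
qed

lemma binding_in_every_set:
  assumes "0 \<le> r" "\<forall>i. 0 \<le> z i" "sum_list (tlist r z us) < r"
  shows "\<forall>u\<in>set us. \<exists>i\<in>u. chosen r z us i = z i"
  using assms
proof (induction r z us rule: procedure_induct)
  case (Cons r z u us)
  define t where "t = step_size r z u"
  note rest_nonneg = remaining_budget_nonneg[of r z u] residual_nonneg[of z r u, OF Cons.hyps(2)]
  have "0 \<le> sum_list (tlist (r - t) (residual r z u) us)"
    unfolding t_def by (rule sum_list_nonneg) (rule tlist_nonneg[OF rest_nonneg])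
  then have rest_lt: "sum_list (tlist (r - t) (residual r z u) us) < r - t" and "t < r"
    using Cons.prems by (simp_all add: tlist_Cons t_def)
  obtain i where "i \<in> u" "residual r z u i = 0" "chosen r z (u # us) i = z i"
    using \<open>t < r\<close> unfolding t_def by (rule binding_worker_of_step_lt_budget[OF Cons.hyps(1,2)])
  moreover have "\<exists>i\<in>v. chosen r z (u # us) i = z i" if v: "v \<in> set us" for v
  proof -
    have "\<forall>v\<in>set us. \<exists>i\<in>v. chosen (r - t) (residual r z u) us i = residual r z u i"
      unfolding t_def by (rule Cons.IH[OF rest_lt[unfolded t_def]])
    then obtain i where "i \<in> v" "chosen (r - t) (residual r z u) us i = residual r z u i"
      using v by blast
    then show ?thesis
      by (intro bexI[of _ i]) (simp_all add: residual_def t_def)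
  qed
  ultimately show ?case
    by auto
qed simp

lemma binding_before_positive_step:
  assumes "0 \<le> r" "\<forall>i. 0 \<le> z i" "k < length us" "0 < tlist r z us ! k" "j < k"
  shows "\<exists>i\<in>us ! j. i \<notin> us ! k \<and> chosen r z us i = z i \<and> chosen r z us i \<le> r - tlist r z us ! k"
  using assms
proof (induction r z us arbitrary: j k rule: procedure_induct)
  case (Cons r z u us)
  define t where "t = step_size r z u"
  define rest where "rest = tlist (r - t) (residual r z u) us"
  note rest_nonneg = remaining_budget_nonneg[of r z u] residual_nonneg[of z r u, OF Cons.hyps(2)]
  obtain k' where k: "k = Suc k'"
    using Cons.prems(3) by (cases k) auto
  have k': "k' < length us" "0 < rest ! k'"
    using Cons.prems(1,2) by (simp_all add: k rest_def tlist_Cons t_def)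
  have "rest ! k' \<le> sum_list rest"
    using k' tlist_nonneg[OF rest_nonneg] by (intro member_le_sum_list) (auto simp: rest_def t_def)
  also have "\<dots> \<le> r - t"
    using sum_tlist_le_budget[OF rest_nonneg] by (simp add: rest_def t_def)
  finally have rest_k': "rest ! k' \<le> r - t" .
  have tlist_Suc: "tlist r z (u # us) ! Suc n = rest ! n" for n
    by (simp add: tlist_Cons rest_def t_def)
  show ?case
  proof (cases j)
    case 0
    have "t < r"
      using k'(2) rest_k' by linarith
    then obtain i where i: "i \<in> u" "residual r z u i = 0" "chosen r z (u # us) i = z i"
      unfolding t_def by (rule binding_worker_of_step_lt_budget[OF Cons.hyps(1,2)])
    have "i \<notin> us ! k'"
    proof
      assume "i \<in> us ! k'"
      then have "rest ! k' \<le> residual r z u i"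
        using tlist_nth_le_chosen[OF rest_nonneg k'(1)] chosen_le_supply[OF rest_nonneg]
        unfolding rest_def t_def by (meson order_trans)
      then show False
        using i(2) k'(2) by simp
    qed
    moreover have "chosen r z (u # us) i = t"
      using i by (simp add: residual_def ind_def t_def)
    ultimately show ?thesis
      using i rest_k' 0 by (intro bexI[of _ i]) (simp_all add: k tlist_Suc)
  next
    case (Suc j')
    then have "j' < k'"
      using Cons.prems(3) k by simp
    then obtain i where i: "i \<in> us ! j'" "i \<notin> us ! k'"
        "chosen (r - t) (residual r z u) us i = residual r z u i"
        "chosen (r - t) (residual r z u) us i \<le> r - t - rest ! k'"
      using Cons.IH[OF k'(1)] k'(2) unfolding rest_def t_def by blast
    have "t * ind u i \<le> t"
      using step_size_nonneg[OF Cons.hyps(1,2)] by (simp add: ind_def t_def)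
    then show ?thesis
      using i Suc by (intro bexI[of _ i]) (simp_all add: k tlist_Suc residual_def t_def)
  qed
qed simp

lemma Chhat_eq_chosen: "Chhat pf f x = chosen 1 x (acc_list pf f)"
  by (simp add: Chhat_def ts_def sum_tlist_ind_eq_chosen fun_eq_iff)

lemma Chhat_nonneg: "\<forall>i. 0 \<le> x i \<Longrightarrow> 0 \<le> Chhat pf f x i"
  by (simp add: Chhat_eq_chosen chosen_nonneg)

lemma Chhat_le: "\<forall>i. 0 \<le> x i \<Longrightarrow> Chhat pf f x i \<le> x i"
  by (simp add: Chhat_eq_chosen chosen_le_supply)

lemma ts_unchanged:
  assumes "\<forall>i. 0 \<le> x i"
    and "\<forall>i. Chhat pf f x i \<le> y i \<and> y i \<le> x i \<or> Chhat pf f x i < x i \<and> x i \<le> y i"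
  shows "ts pf f y = ts pf f x"
  using assms unfolding ts_def Chhat_eq_chosen by (intro tlist_unchanged) simp_all

lemma Chhat_cong_ts: "ts pf f x = ts pf f y \<Longrightarrow> Chhat pf f x = Chhat pf f y"
  by (simp add: Chhat_def)

lemma Chhat_unchanged:
  assumes "\<forall>i. 0 \<le> x i"
    and "\<forall>i. Chhat pf f x i \<le> y i \<and> y i \<le> x i \<or> Chhat pf f x i < x i \<and> x i \<le> y i"
  shows "Chhat pf f y = Chhat pf f x"
  using ts_unchanged[OF assms] by (rule Chhat_cong_ts)

lemma ts_Chhat: "\<forall>i. 0 \<le> x i \<Longrightarrow> ts pf f (Chhat pf f x) = ts pf f x"
  by (rule ts_unchanged) (simp_all add: Chhat_le)

lemma Chhat_idem: "\<forall>i. 0 \<le> x i \<Longrightarrow> Chhat pf f (Chhat pf f x) = Chhat pf f x"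
  by (rule Chhat_cong_ts) (rule ts_Chhat)

lemma ts_nth_le_Chhat:
  "\<forall>i. 0 \<le> x i \<Longrightarrow> k < length (acc_list pf f) \<Longrightarrow> i \<in> acc_list pf f ! k \<Longrightarrow>
    ts pf f x ! k \<le> Chhat pf f x i"
  by (simp add: ts_def Chhat_eq_chosen tlist_nth_le_chosen)

lemma Chhat_eq_zero:
  assumes "\<forall>i. 0 \<le> z i" "\<forall>u\<in>set (acc_list pf f). \<exists>i\<in>u. z i = 0"
  shows "Chhat pf f z = (\<lambda>_. 0)"
proof -
  have "ts pf f z = replicate (length (acc_list pf f)) 0"
    using tlist_blocked_prefix[OF zero_le_one assms, of "[]"] by (simp add: ts_def)
  then show ?thesis
    by (simp add: Chhat_def fun_eq_iff)
qed

lemma Chhat_eq_ind: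
  assumes "\<forall>i. 0 \<le> z i" "k < length (acc_list pf f)"
    and "\<forall>j<k. \<exists>i\<in>acc_list pf f ! j. z i = 0" "\<forall>i\<in>acc_list pf f ! k. 1 \<le> z i"
  shows "Chhat pf f z = ind (acc_list pf f ! k)"
proof
  fix i
  define L where "L = acc_list pf f"
  have "L = take k L @ L ! k # drop (Suc k) L"
    using assms(2) by (simp add: L_def id_take_nth_drop)
  moreover have "\<forall>u\<in>set (take k L). \<exists>i\<in>u. z i = 0"
    using assms(3) by (auto simp: L_def in_set_conv_nth)
  ultimately have "ts pf f z = replicate k 0 @ 1 # replicate (length L - Suc k) 0"
    using tlist_blocked_prefix[OF zero_le_one assms(1)] tlist_saturating_head[OF zero_le_one assms(1,4)]
      assms(2) unfolding ts_def L_def[symmetric] by (metis length_drop length_take min_absorb2 less_imp_le_nat)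
  then have "ts pf f z ! j = (if j = k then 1 else 0)" if "j < length L" for j
    using that by (auto simp: nth_append nth_Cons' L_def)
  then have "Chhat pf f z i = (\<Sum>j<length L. if j = k then ind (L ! k) i else 0)"
    unfolding Chhat_def L_def[symmetric] by (intro sum.cong) auto
  also have "\<dots> = ind (L ! k) i"
    using assms(2) by (simp add: L_def)
  finally show "Chhat pf f z i = ind (acc_list pf f ! k) i"
    by (simp add: L_def)
qed

section \<open>Stability as a fixed-point condition\<close>

definition avail :: "('w \<Rightarrow> 'f option \<Rightarrow> 'f option \<Rightarrow> bool) \<Rightarrow> ('f::finite option \<Rightarrow> 'w::finite \<Rightarrow> real)
    \<Rightarrow> 'f \<Rightarrow> 'w \<Rightarrow> real" where
  "avail pw M f = (\<lambda>w. min (Aprec pw M (Some f) w) 1)"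

lemma le_Aprec: "pseudo_matching M \<Longrightarrow> M g w \<le> Aprec pw M g w"
  unfolding Aprec_def
  by (rule member_le_sum) (auto simp: pseudo_matching_def unit_vec_def)

lemma add_le_Aprec:
  assumes "pseudo_matching M" "h \<noteq> g" "pw w g h"
  shows "M g w + M h w \<le> Aprec pw M g w"
proof -
  have "M g w + M h w = (\<Sum>f'\<in>{g, h}. M f' w)"
    using assms(2) by simp
  also have "\<dots> \<le> Aprec pw M g w"
    unfolding Aprec_def
    by (rule sum_mono2) (use assms in \<open>auto simp: pseudo_matching_def unit_vec_def\<close>)
  finally show ?thesis .
qed

lemma Aprec_fun_upd:
  "Aprec pw (M(h := V)) g w = Aprec pw M g w + (if pw w g h \<or> g = h then V w - M h w else 0)"
proof -
  have "(M(h := V)) f' w = M f' w + (if f' = h then V w - M h w else 0)" for f'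
    by simp
  then show ?thesis
    unfolding Aprec_def by (simp add: sum.distrib)
qed

lemma le_avail: "pseudo_matching M \<Longrightarrow> M (Some f) w \<le> avail pw M f w"
  using le_Aprec[of M "Some f" w pw] by (simp add: avail_def pseudo_matching_def unit_vec_def)

lemma avail_nonneg:
  assumes "pseudo_matching M"
  shows "\<forall>w. 0 \<le> avail pw M f w"
proof
  fix w
  have "0 \<le> M (Some f) w"
    using assms by (simp add: pseudo_matching_def unit_vec_def)
  also have "\<dots> \<le> avail pw M f w"
    using assms by (rule le_avail)
  finally show "0 \<le> avail pw M f w" .
qed

lemma blocking_iff:
  assumes "unit_vec Mf" "\<forall>w. Mf w \<le> A w"
  shows "(\<exists>M''. unit_vec M'' \<and> firm_prefers pf f M'' Mf \<and> (\<forall>w. M'' w \<le> A w))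
     \<longleftrightarrow> Chhat pf f (\<lambda>w. min (A w) 1) \<noteq> Mf"
proof -
  define x where "x = (\<lambda>w. min (A w) 1)"
  have Mf_le_x: "Mf w \<le> x w" for w
    using assms by (simp add: x_def unit_vec_def)
  have x_nonneg: "\<forall>i. 0 \<le> x i"
    using assms Mf_le_x by (meson order_trans unit_vec_def)
  have Chhat_max: "Chhat pf f (\<lambda>i. max (N i) (Mf i)) = Chhat pf f x"
    if "\<forall>i. Chhat pf f x i \<le> max (N i) (Mf i)" "\<forall>i. N i \<le> x i" for N
    using that Mf_le_x by (intro Chhat_unchanged[OF x_nonneg]) simp
  show ?thesis
    unfolding x_def[symmetric]
  proof
    assume "\<exists>M''. unit_vec M'' \<and> firm_prefers pf f M'' Mf \<and> (\<forall>w. M'' w \<le> A w)"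
    then obtain M'' where M'': "unit_vec M''" "firm_prefers pf f M'' Mf" "\<forall>w. M'' w \<le> A w"
      by blast
    show "Chhat pf f x \<noteq> Mf"
    proof
      assume Ch_x: "Chhat pf f x = Mf"
      have "M'' = Chhat pf f (\<lambda>i. max (M'' i) (Mf i))"
        using M''(2) by (simp add: firm_prefers_def)
      also have "\<dots> = Mf"
        using M''(1,3) Ch_x by (subst Chhat_max) (auto simp: x_def unit_vec_def)
      finally show False
        using M''(2) by (simp add: firm_prefers_def)
    qed
  next
    assume ne: "Chhat pf f x \<noteq> Mf"
    define N where "N = Chhat pf f x"
    have N_bounds: "0 \<le> N i" "N i \<le> x i" for i
      using Chhat_nonneg[OF x_nonneg] Chhat_le[OF x_nonneg] by (simp_all add: N_def)
    have "firm_prefers pf f N Mf"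
      using ne Chhat_max[of N] N_bounds by (simp add: firm_prefers_def N_def)
    moreover have "unit_vec N" "\<forall>w. N w \<le> A w"
      using N_bounds by (auto simp: unit_vec_def x_def)
    ultimately show "\<exists>M''. unit_vec M'' \<and> firm_prefers pf f M'' Mf \<and> (\<forall>w. M'' w \<le> A w)"
      by blast
  qed
qed

lemma stable_iff_avail:
  "stable pw pf M \<longleftrightarrow> pseudo_matching M
     \<and> (\<forall>f w. pw w None (Some f) \<longrightarrow> M (Some f) w = 0)
     \<and> (\<forall>f. Chhat pf f (avail pw M f) = M (Some f))"
proof -
  have "(\<exists>M''. unit_vec M'' \<and> firm_prefers pf f M'' (M (Some f)) \<and> (\<forall>w. M'' w \<le> Aprec pw M (Some f) w))
      \<longleftrightarrow> Chhat pf f (avail pw M f) \<noteq> M (Some f)"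
    if "pseudo_matching M" for f
    unfolding avail_def
    using that le_Aprec by (intro blocking_iff) (auto simp: pseudo_matching_def)
  moreover have "Chhat pf f (M (Some f)) = M (Some f)"
    if "pseudo_matching M" "Chhat pf f (avail pw M f) = M (Some f)" for f
    using Chhat_idem[where pf=pf and f=f, OF avail_nonneg[OF that(1), where pw=pw and f=f]] that(2)
    by simp
  ultimately show ?thesis
    unfolding stable_def by metis
qed

section \<open>Stable transformations\<close>

lemma avail_fun_upd_saturated:
  assumes "M (Some g) w = avail pw M g w" "M (Some g) w < 1"
  shows "avail pw (M(Some g := V)) g w = min (V w) 1"
  using assms by (simp add: avail_def Aprec_fun_upd min_def split: if_splits)

lemma Chhat_avail_unchanged:
  assumes pm: "pseudo_matching M" and pm': "pseudo_matching M'"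
    and ch: "Chhat pf f (avail pw M f) = M (Some f)" and eq: "M' (Some f) = M (Some f)"
    and unsaturated:
      "\<forall>w. Aprec pw M (Some f) w < Aprec pw M' (Some f) w \<longrightarrow> M (Some f) w < Aprec pw M (Some f) w"
  shows "Chhat pf f (avail pw M' f) = M' (Some f)"
proof -
  have "Chhat pf f (avail pw M' f) = Chhat pf f (avail pw M f)"
  proof (rule Chhat_unchanged[OF avail_nonneg[OF pm]], intro allI)
    fix w
    have lower: "M (Some f) w \<le> avail pw M' f w"
      using le_avail[OF pm', of f w] eq by simp
    show "Chhat pf f (avail pw M f) w \<le> avail pw M' f w \<and> avail pw M' f w \<le> avail pw M f w
      \<or> Chhat pf f (avail pw M f) w < avail pw M f w \<and> avail pw M f w \<le> avail pw M' f w"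
    proof (cases "avail pw M' f w \<le> avail pw M f w")
      case True
      then show ?thesis
        using lower ch by simp
    next
      case False
      then have "Aprec pw M (Some f) w < Aprec pw M' (Some f) w" "avail pw M f w = Aprec pw M (Some f) w"
        by (auto simp: avail_def)
      then show ?thesis
        using unsaturated ch False by auto
    qed
  qed
  then show ?thesis
    using ch eq by simp
qed

lemma stable_fun_upd_Some:
  assumes st: "stable pw pf M" and V: "unit_vec V"
    and V_rational: "\<forall>w. pw w None (Some g) \<longrightarrow> V w = 0"
    and V_increase: "\<forall>w. M (Some g) w < V w \<longrightarrow> 0 < M (Some g) w"
    and V_choice: "Chhat pf g (avail pw (M(Some g := V)) g) = V"
  shows "stable pw pf (M(Some g := V))"
proof -
  have pm: "pseudo_matching M" and rational: "\<forall>f w. pw w None (Some f) \<longrightarrow> M (Some f) w = 0"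
    and ch: "\<forall>f. Chhat pf f (avail pw M f) = M (Some f)"
    using st by (simp_all add: stable_iff_avail)
  have pm': "pseudo_matching (M(Some g := V))"
    using pm V by (simp add: pseudo_matching_def)
  have "Chhat pf f (avail pw (M(Some g := V)) f) = (M(Some g := V)) (Some f)" for f
  proof (cases "f = g")
    case True
    then show ?thesis
      using V_choice by simp
  next
    case False
    show ?thesis
    proof (rule Chhat_avail_unchanged[OF pm pm'])
      show "Chhat pf f (avail pw M f) = M (Some f)" "(M(Some g := V)) (Some f) = M (Some f)"
        using ch False by simp_all
      show "\<forall>w. Aprec pw M (Some f) w < Aprec pw (M(Some g := V)) (Some f) w
          \<longrightarrow> M (Some f) w < Aprec pw M (Some f) w"
      proof (intro allI impI)
        fix w
        assume "Aprec pw M (Some f) w < Aprec pw (M(Some g := V)) (Some f) w"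
        then have "pw w (Some f) (Some g)" "M (Some g) w < V w"
          using False by (auto simp: Aprec_fun_upd split: if_splits)
        then show "M (Some f) w < Aprec pw M (Some f) w"
          using add_le_Aprec[OF pm, of "Some g" "Some f" pw w] V_increase False by force
      qed
    qed
  qed
  then show ?thesis
    using pm' rational V_rational by (simp add: stable_iff_avail)
qed

lemma ts_eq_ts_avail:
  assumes "stable pw pf M"
  shows "ts pf g (M (Some g)) = ts pf g (avail pw M g)"
proof -
  have pm: "pseudo_matching M" and "Chhat pf g (avail pw M g) = M (Some g)"
    using assms by (simp_all add: stable_iff_avail)
  then show ?thesis
    using ts_Chhat[where pf=pf and f=g, OF avail_nonneg[OF pm, where pw=pw and f=g]] by simp
qed

lemma Chhat_avail_fun_upd_zero:
  assumes st: "stable pw pf M" and budget: "sum_list (ts pf g (M (Some g))) < 1"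
  shows "Chhat pf g (avail pw (M(Some g := (\<lambda>_. 0))) g) = (\<lambda>_. 0)"
proof -
  define L where "L = acc_list pf g"
  define x where "x = avail pw M g"
  have pm: "pseudo_matching M" and Ch_x: "chosen 1 x L = M (Some g)"
    using st by (simp_all add: stable_iff_avail Chhat_eq_chosen L_def x_def)
  have pm': "pseudo_matching (M(Some g := (\<lambda>_. 0)))"
    using pm by (simp add: pseudo_matching_def unit_vec_def)
  have x_nonneg: "\<forall>i. 0 \<le> x i"
    using avail_nonneg[OF pm] by (simp add: x_def)
  have "sum_list (tlist 1 x L) < 1"
    using budget ts_eq_ts_avail[OF st] by (simp add: ts_def L_def x_def)
  note binding = binding_in_every_set[OF zero_le_one x_nonneg this]
    and below_one = le_less_trans[OF chosen_le_sum_tlist[OF zero_le_one x_nonneg] this]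
  show ?thesis
  proof (rule Chhat_eq_zero[OF avail_nonneg[OF pm']], intro ballI)
    fix u
    assume "u \<in> set (acc_list pf g)"
    then obtain i where "i \<in> u" "chosen 1 x L i = x i"
      using binding by (auto simp: L_def)
    then have "avail pw (M(Some g := (\<lambda>_. 0))) g i = 0"
      using below_one[of i] Ch_x avail_fun_upd_saturated[of M g i pw] unfolding x_def by simp
    then show "\<exists>i\<in>u. avail pw (M(Some g := (\<lambda>_. 0))) g i = 0"
      using \<open>i \<in> u\<close> by blast
  qed
qed

lemma Chhat_avail_fun_upd_ind:
  assumes st: "stable pw pf M" and k: "k < length (acc_list pf g)" and pos: "0 < ts pf g (M (Some g)) ! k"
  shows "Chhat pf g (avail pw (M(Some g := ind (acc_list pf g ! k))) g) = ind (acc_list pf g ! k)"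
proof -
  define L where "L = acc_list pf g"
  define M' where "M' = M(Some g := ind (L ! k))"
  define x where "x = avail pw M g"
  have pm: "pseudo_matching M" and Ch_x: "chosen 1 x L = M (Some g)"
    using st by (simp_all add: stable_iff_avail Chhat_eq_chosen L_def x_def)
  have pm': "pseudo_matching M'"
    using pm by (simp add: M'_def pseudo_matching_def unit_vec_def ind_def)
  have x_nonneg: "\<forall>i. 0 \<le> x i"
    using avail_nonneg[OF pm] by (simp add: x_def)
  have pos_x: "0 < tlist 1 x L ! k"
    using pos ts_eq_ts_avail[OF st] by (simp add: ts_def L_def x_def)
  have "Chhat pf g (avail pw M' g) = ind (L ! k)"
    unfolding L_def
  proof (rule Chhat_eq_ind[OF avail_nonneg[OF pm'] k]; intro allI ballI impI)
    fix j
    assume "j < k"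
    then obtain i where i: "i \<in> L ! j" "i \<notin> L ! k" "chosen 1 x L i = x i"
        "chosen 1 x L i \<le> 1 - tlist 1 x L ! k"
      using binding_before_positive_step[OF zero_le_one x_nonneg k[folded L_def] pos_x] by blast
    then have "avail pw M' g i = 0"
      using pos_x Ch_x avail_fun_upd_saturated[of M g i pw] unfolding M'_def x_def by (simp add: ind_def)
    then show "\<exists>i\<in>acc_list pf g ! j. avail pw M' g i = 0"
      using i(1) L_def by blast
  next
    fix i
    assume "i \<in> acc_list pf g ! k"
    then show "1 \<le> avail pw M' g i"
      using le_Aprec[OF pm, of "Some g" i pw]
      by (simp add: M'_def avail_def Aprec_fun_upd ind_def L_def)
  qed
  then show ?thesis
    by (simp add: M'_def L_def)
qed

lemma stable_type1:
  assumes st: "stable pw pf M" and "type1 pf M M'"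
  shows "stable pw pf M'"
proof -
  obtain g where budget: "sum_list (ts pf g (M (Some g))) < 1" and M': "M' = M(Some g := (\<lambda>_. 0))"
    using assms(2) unfolding type1_def by blast
  have "\<forall>w. 0 \<le> M (Some g) w"
    using st by (simp add: stable_def pseudo_matching_def unit_vec_def)
  then show ?thesis
    unfolding M' using Chhat_avail_fun_upd_zero[OF st budget]
    by (intro stable_fun_upd_Some[OF st]) (simp_all add: unit_vec_def not_less)
qed

lemma stable_type2:
  assumes st: "stable pw pf M" and "type2 pf M M'"
  shows "stable pw pf M'"
proof -
  obtain g k where k: "k < length (acc_list pf g)" and pos: "0 < ts pf g (M (Some g)) ! k"
    and M': "M' = M(Some g := ind (acc_list pf g ! k))"
    using assms(2) unfolding type2_def by blast
  define u where "u = acc_list pf g ! k"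
  have M_nonneg: "\<forall>w. 0 \<le> M (Some g) w" and M_fixed: "Chhat pf g (M (Some g)) = M (Some g)"
    and rational: "\<forall>w. pw w None (Some g) \<longrightarrow> M (Some g) w = 0"
    using st by (simp_all add: stable_def pseudo_matching_def unit_vec_def)
  have M_pos: "0 < M (Some g) w" if "w \<in> u" for w
    using pos ts_nth_le_Chhat[OF M_nonneg k, of w] that M_fixed by (simp add: u_def)
  have "\<forall>w. pw w None (Some g) \<longrightarrow> ind u w = 0"
    using rational M_pos by (fastforce simp: ind_def)
  moreover have "\<forall>w. M (Some g) w < ind u w \<longrightarrow> 0 < M (Some g) w"
  proof (intro allI impI)
    fix w
    assume "M (Some g) w < ind u w"
    then show "0 < M (Some g) w"
      using M_pos M_nonneg[rule_format, of w] by (cases "w \<in> u") (simp_all add: ind_def)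
  qed
  ultimately show ?thesis
    unfolding M' using Chhat_avail_fun_upd_ind[OF st k pos]
    by (intro stable_fun_upd_Some[OF st]) (simp_all add: u_def unit_vec_def ind_def)
qed

lemma stable_type3:
  assumes st: "stable pw pf M" and "type3 M M'"
  shows "stable pw pf M'"
proof -
  obtain w' v where fractional: "0 < M None w'" "M None w' < 1" and v: "v \<in> {0, 1}"
    and M': "M' = M(None := (M None)(w' := v))"
    using assms(2) unfolding type3_def by blast
  have pm: "pseudo_matching M" and rational: "\<forall>f w. pw w None (Some f) \<longrightarrow> M (Some f) w = 0"
    and ch: "\<forall>f. Chhat pf f (avail pw M f) = M (Some f)"
    using st by (simp_all add: stable_iff_avail)
  have pm': "pseudo_matching M'"
    using pm v unfolding M' by (auto simp: pseudo_matching_def unit_vec_def)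
  have "Chhat pf f (avail pw M' f) = M' (Some f)" for f
  proof (rule Chhat_avail_unchanged[OF pm pm'])
    show "Chhat pf f (avail pw M f) = M (Some f)" "M' (Some f) = M (Some f)"
      using ch M' by simp_all
    show "\<forall>w. Aprec pw M (Some f) w < Aprec pw M' (Some f) w \<longrightarrow> M (Some f) w < Aprec pw M (Some f) w"
    proof (intro allI impI)
      fix w
      assume "Aprec pw M (Some f) w < Aprec pw M' (Some f) w"
      then have "pw w (Some f) None" "w = w'"
        unfolding M' by (auto simp: Aprec_fun_upd split: if_splits)
      then show "M (Some f) w < Aprec pw M (Some f) w"
        using add_le_Aprec[OF pm, of None "Some f" pw w] fractional by simp
    qed
  qed
  then show ?thesis
    using pm' rational M' by (simp add: stable_iff_avail)
qed

theorem lemma3: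
  fixes pw :: "'w::finite \<Rightarrow> 'f::finite option \<Rightarrow> 'f option \<Rightarrow> bool"
    and pf :: "'f \<Rightarrow> 'w set \<Rightarrow> 'w set \<Rightarrow> bool"
    and M M' :: "'f option \<Rightarrow> 'w \<Rightarrow> real"
  assumes "\<forall>w. strict_lin (pw w)"
    and "\<forall>f. strict_lin (pf f)"
    and "stable pw pf M"
    and "type1 pf M M' \<or> type2 pf M M' \<or> type3 M M'"
  shows "stable pw pf M'"
  \<comment> \<open>The preferences need not be linear orders: the argument works for any list acc_list pf f.\<close>
  using assms(3,4) stable_type1 stable_type2 stable_type3 by blast

end
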